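(* Let $X$ be a Banach space and $(x_n)_{n\in\mathbb{N}}$ a sequence in $X$. Let $E=\left\{s \in S : \left(\sum_{i=1}^n x_{s(i)}\right)_n \text{ is bounded}\right\}$ and $F=\left\{p \in P : \left(\sum_{i=1}^n x_{p(i)}\right)_n \text{ is bounded}\right\}$. If $E \neq S$ (equivalently, $F \neq P$), then $E$ is meager in $S$ and $F$ is meager in $P$.
   Context: $S=\{s\in\mathbb{N}^{\mathbb{N}} : s \text{ strictly increasing}\}$ and $P=\{p\in\mathbb{N}^{\mathbb{N}} : p \text{ a bijection of } \mathbb{N}\}$, both with the subspace topology of $\mathbb{N}^{\mathbb{N}}$ carrying the product topology of discrete spaces $\mathbb{N}$ (both are Polish spaces). *)

theory Defs
  imports "HOL-Analysis.Analysis"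
begin

definition baire_top :: "(nat \<Rightarrow> nat) topology" where
  "baire_top = product_topology (\<lambda>_. discrete_topology (UNIV :: nat set)) UNIV"

definition S_set :: "(nat \<Rightarrow> nat) set" where
  "S_set = {s. strict_mono s}"

definition P_set :: "(nat \<Rightarrow> nat) set" where
  "P_set = {p. bij p}"

definition nowhere_dense_in :: "'a topology \<Rightarrow> 'a set \<Rightarrow> bool" where
  "nowhere_dense_in T A \<longleftrightarrow> A \<subseteq> topspace T \<and> T interior_of (T closure_of A) = {}"

definition meager_in :: "'a topology \<Rightarrow> 'a set \<Rightarrow> bool" where
  "meager_in T A \<longleftrightarrow> A \<subseteq> topspace T \<and>
     (\<exists>N :: nat \<Rightarrow> 'a set. (\<forall>n. nowhere_dense_in T (N n)) \<and> A \<subseteq> (\<Union>n. N n))"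

end

theory Submission
  imports Defs
begin

text \<open>
  The rearrangements with bounded partial sums are the union over m of the sets N m of those
  whose partial sums all have norm at most m, and each N m is nowhere dense. For this fix a
  strictly increasing s with unbounded partial sums: any finite prefix of an admissible sequence
  (increasing, resp. bijective) can be continued by a tail of s lying beyond the values of the
  prefix until some partial sum exceeds m, and the continuation is again admissible (for
  permutations after completing it to a bijection). The whole cylinder fixed by the longer prefix
  then misses N m.
\<close>

definition cylinder :: "(nat \<Rightarrow> nat) \<Rightarrow> nat \<Rightarrow> (nat \<Rightarrow> nat) set" where
  "cylinder t k = {f. \<forall>i<k. f i = t i}"

lemma topspace_baire_top [simp]: "topspace baire_top = UNIV"
  unfolding baire_top_def by (auto simp: PiE_def Pi_def extensional_def)

lemma openin_baire_top_cylinder: "openin baire_top (cylinder t k)"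
proof -
  have eq: "cylinder t k = PiE UNIV (\<lambda>i. if i < k then {t i} else UNIV)"
    unfolding cylinder_def by (auto simp: PiE_def Pi_def extensional_def)
  have "finite {i. (if i < k then {t i} else UNIV) \<noteq> (UNIV :: nat set)}"
    by (rule finite_subset[of _ "{..<k}"]) auto
  then show ?thesis
    unfolding eq baire_top_def by (subst openin_PiE_gen) auto
qed

lemma openin_baire_top_contains_cylinder:
  assumes "openin baire_top U" "u \<in> U"
  obtains k where "cylinder u k \<subseteq> U"
proof -
  obtain X where X: "u \<in> PiE UNIV X" "finite {i. X i \<noteq> UNIV}" "PiE UNIV X \<subseteq> U"
    using product_topology_open_contains_basis[OF assms[unfolded baire_top_def]] by auto
  obtain k where k: "{i. X i \<noteq> UNIV} \<subseteq> {..<k}"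
    using finite_nat_bounded[OF X(2)] by blast
  have "cylinder u k \<subseteq> PiE UNIV X"
  proof
    fix f assume f: "f \<in> cylinder u k"
    have "f i \<in> X i" for i
    proof (cases "i < k")
      case True
      then show ?thesis
        using f PiE_mem[OF X(1)] by (simp add: cylinder_def)
    next
      case False
      then show ?thesis
        using k by blast
    qed
    then show "f \<in> PiE UNIV X"
      by (simp add: PiE_def Pi_def)
  qed
  then have "cylinder u k \<subseteq> U"
    using X(3) by (rule subset_trans)
  then show thesis
    by (rule that)
qed

lemma nowhere_dense_in_baire_subtopologyI:
  assumes "N \<subseteq> A"
    and escape: "\<And>u k. u \<in> A \<Longrightarrow> \<exists>t \<in> A \<inter> cylinder u k. \<exists>l. cylinder t l \<inter> N = {}"
  shows "nowhere_dense_in (subtopology baire_top A) N"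
  unfolding nowhere_dense_in_def
proof
  let ?T = "subtopology baire_top A"
  show "N \<subseteq> topspace ?T" using assms(1) by simp
  show "?T interior_of (?T closure_of N) = {}"
  proof (rule ccontr)
    assume "?T interior_of (?T closure_of N) \<noteq> {}"
    then obtain u U where "openin ?T U" "u \<in> U" and U_closure: "U \<subseteq> ?T closure_of N"
      unfolding interior_of_def by auto
    then obtain U' where U': "openin baire_top U'" "U = U' \<inter> A" "u \<in> U'" "u \<in> A"
      by (auto simp: openin_subtopology)
    then obtain k where "cylinder u k \<subseteq> U'"
      using openin_baire_top_contains_cylinder[OF U'(1,3)] by blast
    moreover obtain t l where t: "t \<in> A" "t \<in> cylinder u k" and "cylinder t l \<inter> N = {}"
      using escape[OF U'(4), of k] by blast
    define V where "V = cylinder t (max k l) \<inter> A"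
    have "openin ?T V"
      unfolding V_def openin_subtopology using openin_baire_top_cylinder by blast
    moreover have "t \<in> V"
      using t by (simp add: V_def cylinder_def)
    moreover have "V \<subseteq> U"
      using \<open>cylinder u k \<subseteq> U'\<close> t(2) by (auto simp: V_def U'(2) cylinder_def)
    ultimately obtain f where "f \<in> N" "f \<in> V"
      using U_closure by (metis in_closure_of subsetD)
    moreover have "V \<subseteq> cylinder t l"
      by (auto simp: V_def cylinder_def)
    ultimately show False
      using \<open>cylinder t l \<inter> N = {}\<close> by blast
  qed
qed

lemma meager_in_bounded_partial_sums:
  fixes x :: "nat \<Rightarrow> 'a::real_normed_vector"
  assumes unbounded_near: "\<And>u k M. u \<in> A \<Longrightarrow>
      \<exists>t \<in> A \<inter> cylinder u k. \<exists>n. M < norm (\<Sum>i<n. x (t i))"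
  shows "meager_in (subtopology baire_top A) {f \<in> A. bounded (range (\<lambda>n. \<Sum>i<n. x (f i)))}"
proof -
  define N where "N m = {f \<in> A. \<forall>n. norm (\<Sum>i<n. x (f i)) \<le> real m}" for m :: nat
  have "nowhere_dense_in (subtopology baire_top A) (N m)" for m
  proof (rule nowhere_dense_in_baire_subtopologyI)
    show "N m \<subseteq> A" by (auto simp: N_def)
    fix u k assume "u \<in> A"
    then obtain t n where t: "t \<in> A \<inter> cylinder u k" and n: "real m < norm (\<Sum>i<n. x (t i))"
      using unbounded_near by blast
    have "f \<notin> N m" if "f \<in> cylinder t n" for f
    proof -
      have "(\<Sum>i<n. x (f i)) = (\<Sum>i<n. x (t i))"
        using that by (intro sum.cong) (auto simp: cylinder_def)
      with n show ?thesis
        by (auto simp: N_def not_le intro!: exI[of _ n])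
    qed
    then have "cylinder t n \<inter> N m = {}" by blast
    with t show "\<exists>t \<in> A \<inter> cylinder u k. \<exists>l. cylinder t l \<inter> N m = {}" by blast
  qed
  moreover have "{f \<in> A. bounded (range (\<lambda>n. \<Sum>i<n. x (f i)))} \<subseteq> (\<Union>m. N m)"
  proof
    fix f assume f: "f \<in> {f \<in> A. bounded (range (\<lambda>n. \<Sum>i<n. x (f i)))}"
    then obtain m where "\<forall>n. norm (\<Sum>i<n. x (f i)) \<le> real (Suc m)"
      by (auto simp flip: Bseq_eq_bounded simp: Bseq_iff)
    with f have "f \<in> N (Suc m)"
      unfolding N_def by blast
    then show "f \<in> (\<Union>m. N m)" by blast
  qed
  ultimately show ?thesis
    unfolding meager_in_def by auto
qed

lemma sum_lessThan_add:
  fixes y :: "nat \<Rightarrow> 'a::comm_monoid_add"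
  shows "(\<Sum>i<c + n. y i) = (\<Sum>i<c. y i) + (\<Sum>i<n. y (c + i))"
  by (induction n) (simp_all add: add.assoc)

lemma unbounded_partial_sums_shift:
  fixes y :: "nat \<Rightarrow> 'a::real_normed_vector"
  assumes "\<not> bounded (range (\<lambda>n. \<Sum>i<n. y i))"
  shows "\<exists>n. M < norm (K + (\<Sum>i<n. y (c + i)))"
proof -
  have "(\<Sum>i<n + c. y i) = (\<Sum>i<n. y (c + i)) + (\<Sum>i<c. y i)" for n
    using sum_lessThan_add[of y c n] by (simp add: add.commute)
  moreover have "\<not> Bseq (\<lambda>n. \<Sum>i<n + c. y i)"
    using assms Bseq_offset[of "\<lambda>n. \<Sum>i<n. y i" c] Bseq_eq_bounded by blast
  ultimately have "\<not> Bseq (\<lambda>n. (\<Sum>i<n. y (c + i)) + (\<Sum>i<c. y i))"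
    by simp
  then have "\<not> Bseq (\<lambda>n. (\<Sum>i<n. y (c + i)) + K)"
    by (simp add: Bseq_add_iff)
  then obtain n where "max M 1 < norm ((\<Sum>i<n. y (c + i)) + K)"
    unfolding Bseq_def by (meson max.strict_coboundedI2 not_le zero_less_one)
  then show ?thesis
    by (metis add.commute max.strict_boundedE)
qed

definition graft :: "nat \<Rightarrow> (nat \<Rightarrow> 'a) \<Rightarrow> (nat \<Rightarrow> 'a) \<Rightarrow> nat \<Rightarrow> 'a" where
  "graft k u v i = (if i < k then u i else v (i - k))"

lemma graft_in_cylinder: "graft k u v \<in> cylinder u k"
  by (simp add: graft_def cylinder_def)

lemma sum_graft: "(\<Sum>i<k + n. x (graft k u v i)) = (\<Sum>i<k. x (u i)) + (\<Sum>i<n. x (v i))"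
  by (simp add: sum_lessThan_add graft_def)

lemma strict_mono_graft:
  assumes "strict_mono_on {..<k} u" "strict_mono v" "\<And>i. i < k \<Longrightarrow> u i < v 0"
  shows "strict_mono (graft k u v)"
proof (rule strict_monoI)
  fix a b :: nat assume "a < b"
  consider "b < k" | "a < k" "k \<le> b" | "k \<le> a"
    by linarith
  then show "graft k u v a < graft k u v b"
  proof cases
    case 1
    then show ?thesis
      using \<open>a < b\<close> assms(1) by (simp add: graft_def strict_mono_onD)
  next
    case 2
    then have "u a < v 0" "v 0 \<le> v (b - k)"
      using assms(2,3) by (auto simp: strict_mono_less_eq)
    with 2 show ?thesis by (simp add: graft_def)
  next
    case 3
    then show ?thesis
      using \<open>a < b\<close> assms(2) by (simp add: graft_def strict_mono_less)
  qed
qed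

lemma inj_graft:
  assumes "inj_on u {..<k}" "inj v" "\<And>i j. i < k \<Longrightarrow> u i \<noteq> v j"
  shows "inj (graft k u v)"
proof (rule injI)
  fix a b assume eq: "graft k u v a = graft k u v b"
  consider "a < k" "b < k" | "a < k" "k \<le> b" | "k \<le> a" "b < k" | "k \<le> a" "k \<le> b"
    by linarith
  then show "a = b"
  proof cases
    case 1
    then show ?thesis
      using eq assms(1) by (simp add: graft_def inj_on_eq_iff)
  next
    case 2
    then show ?thesis
      using eq assms(3)[of a "b - k"] by (simp add: graft_def)
  next
    case 3
    then show ?thesis
      using eq assms(3)[of b "a - k"] by (simp add: graft_def)
  next
    case 4
    then show ?thesis
      using eq assms(2) by (simp add: graft_def inj_eq)
  qed
qed

lemma inj_on_lessThan_extends_to_bij: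
  fixes f :: "nat \<Rightarrow> nat"
  assumes "inj_on f {..<n}"
  obtains p where "bij p" "\<And>i. i < n \<Longrightarrow> p i = f i"
proof -
  define B where "B = f ` {..<n}"
  define p where "p i = (if i < n then f i else enumerate (- B) (i - n))" for i
  have "bij_betw p {..<n} B"
    using assms by (simp add: B_def p_def bij_betw_def inj_on_def)
  moreover have "bij_betw p {n..} (- B)"
  proof -
    have "infinite (- B)"
      by (simp add: B_def Compl_eq_Diff_UNIV Diff_infinite_finite)
    then have "bij_betw (enumerate (- B)) UNIV (- B)"
      by (rule bij_enumerate)
    moreover have "bij_betw (\<lambda>i. i - n) {n..} UNIV"
      by (rule bij_betw_byWitness[where f' = "\<lambda>i. i + n"]) auto
    ultimately have "bij_betw (enumerate (- B) \<circ> (\<lambda>i. i - n)) {n..} (- B)"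
      by (rule bij_betw_trans[rotated])
    then show ?thesis
      by (rule bij_betw_cong[THEN iffD1, rotated]) (simp add: p_def)
  qed
  ultimately have "bij_betw p ({..<n} \<union> {n..}) (B \<union> - B)"
    by (rule bij_betw_combine) simp
  moreover have "{..<n} \<union> {n..} = UNIV" by auto
  ultimately show thesis
    using that by (simp add: p_def)
qed

lemma graft_tail_partial_sums_unbounded:
  fixes x :: "nat \<Rightarrow> 'a::real_normed_vector"
  assumes "\<not> bounded (range (\<lambda>n. \<Sum>i<n. x (s i)))"
  shows "\<exists>n. M < norm (\<Sum>i<k + n. x (graft k u (\<lambda>i. s (c + i)) i))"
  using unbounded_partial_sums_shift[of "x \<circ> s"] assms by (simp add: sum_graft)

lemma S_set_unbounded_continuation:
  fixes x :: "nat \<Rightarrow> 'a::real_normed_vector" and s :: "nat \<Rightarrow> nat"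
  assumes s: "strict_mono s" "\<not> bounded (range (\<lambda>n. \<Sum>i<n. x (s i)))" and "u \<in> S_set"
  shows "\<exists>t \<in> S_set \<inter> cylinder u k. \<exists>n. M < norm (\<Sum>i<n. x (t i))"
proof -
  define t where "t = graft k u (\<lambda>i. s (u k + i))"
  have "strict_mono t"
    unfolding t_def
  proof (rule strict_mono_graft)
    show "strict_mono_on {..<k} u" "strict_mono (\<lambda>i. s (u k + i))"
      using \<open>u \<in> S_set\<close> s(1) by (auto simp: S_set_def strict_mono_def strict_mono_on_def)
    show "u i < s (u k + 0)" if "i < k" for i
    proof -
      have "u i < u k"
        using \<open>u \<in> S_set\<close> that by (simp add: S_set_def strict_mono_less)
      also have "u k \<le> s (u k + 0)"
        using strict_mono_imp_increasing[OF s(1)] by simp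
      finally show ?thesis .
    qed
  qed
  then show ?thesis
    using graft_tail_partial_sums_unbounded[where x = x and s = s, OF s(2)] graft_in_cylinder
    by (fastforce simp: S_set_def t_def)
qed

lemma P_set_unbounded_continuation:
  fixes x :: "nat \<Rightarrow> 'a::real_normed_vector" and s :: "nat \<Rightarrow> nat"
  assumes s: "strict_mono s" "\<not> bounded (range (\<lambda>n. \<Sum>i<n. x (s i)))" and "u \<in> P_set"
  shows "\<exists>t \<in> P_set \<inter> cylinder u k. \<exists>n. M < norm (\<Sum>i<n. x (t i))"
proof -
  obtain c where c: "u ` {..<k} \<subseteq> {..<c}"
    using finite_nat_bounded by blast
  define g where "g = graft k u (\<lambda>i. s (c + i))"
  obtain n where n: "M < norm (\<Sum>i<k + n. x (g i))"
    using graft_tail_partial_sums_unbounded[where x = x and s = s, OF s(2)] unfolding g_def by blast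
  have "inj g"
    unfolding g_def
  proof (rule inj_graft)
    show "inj_on u {..<k}" "inj (\<lambda>i. s (c + i))"
      using \<open>u \<in> P_set\<close> s(1) by (auto simp: P_set_def bij_def inj_on_def strict_mono_eq)
    show "u i \<noteq> s (c + j)" if "i < k" for i j
      using c that strict_mono_imp_increasing[OF s(1), of "c + j"] by auto
  qed
  then obtain p where "bij p" and p: "\<And>i. i < k + n \<Longrightarrow> p i = g i"
    by (metis inj_on_subset subset_UNIV inj_on_lessThan_extends_to_bij)
  have "p \<in> P_set \<inter> cylinder u k"
    using \<open>bij p\<close> p graft_in_cylinder[of k u] by (simp add: P_set_def g_def cylinder_def)
  moreover have "(\<Sum>i<k + n. x (p i)) = (\<Sum>i<k + n. x (g i))"
    using p by simp
  ultimately show ?thesis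
    using n by metis
qed

theorem mainTheorem2:
  fixes x :: "nat \<Rightarrow> 'a::banach"
  defines "E \<equiv> {s \<in> S_set. bounded (range (\<lambda>n. \<Sum>i<n. x (s i)))}"
      and "F \<equiv> {p \<in> P_set. bounded (range (\<lambda>n. \<Sum>i<n. x (p i)))}"
  assumes "E \<noteq> S_set"
  shows "meager_in (subtopology baire_top S_set) E \<and> meager_in (subtopology baire_top P_set) F"
proof -
  obtain s where "s \<in> S_set" "\<not> bounded (range (\<lambda>n. \<Sum>i<n. x (s i)))"
    using assms(3) unfolding E_def by blast
  then have s: "strict_mono s" "\<not> bounded (range (\<lambda>n. \<Sum>i<n. x (s i)))"
    by (simp_all add: S_set_def)
  have "meager_in (subtopology baire_top S_set) E"
    unfolding E_def
    by (rule meager_in_bounded_partial_sums) (rule S_set_unbounded_continuation[OF s])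
  moreover have "meager_in (subtopology baire_top P_set) F"
    unfolding F_def
    by (rule meager_in_bounded_partial_sums) (rule P_set_unbounded_continuation[OF s])
  ultimately show ?thesis ..
qed

end
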